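(* Let $q\ge 4$ be a power of $2$. Then there exists a linear AOA$(1,3,q+2,q)$.
   Context: An orthogonal array OA$(t,k,v)$ (with $1\le t\le k$) is a $v^t\times k$ array with entries from a set $X$ of size $v$ such that, for every choice of $t$ of its columns, each $t$-tuple in $X^t$ appears exactly once as a row of the corresponding $v^t\times t$ subarray. For integers $1\le s\le t\le k$, an augmented orthogonal array AOA$(s,t,k,v)$ is a $v^t\times(k+1)$ array $A$ such that: (1) the first $k$ columns of $A$ form an OA$(t,k,v)$ on a symbol set $X$ of size $v$; (2) the last column of $A$ has entries from a set $Y$ of size $v^{t-s}$; (3) for any choice of $s$ of the first $k$ columns, these $s$ columns together with the last column contain every $(s+1)$-tuple of $X^s\times Y$ exactly once as a row. For a prime power $q$, an AOA$(s,t,k,q)$ is linear if $X=\mathbb{F}_q$, $Y=\mathbb{F}_q^{t-s}$, and its set of rows, regarded as vectors in $\mathbb{F}_q^{k}\times\mathbb{F}_q^{t-s}=\mathbb{F}_q^{k+t-s}$, is an $\mathbb{F}_q$-linear subspace. *)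

theory Defs
  imports "HOL-Library.FuncSet"
begin

definition OA :: "nat \<Rightarrow> nat \<Rightarrow> 'a set \<Rightarrow> 'a list list \<Rightarrow> bool" where
  "OA t k X A \<longleftrightarrow> 1 \<le> t \<and> t \<le> k \<and> finite X \<and>
     length A = card X ^ t \<and>
     (\<forall>r \<in> set A. length r = k \<and> set r \<subseteq> X) \<and>
     (\<forall>C f. C \<subseteq> {0..<k} \<longrightarrow> card C = t \<longrightarrow> f \<in> C \<rightarrow>\<^sub>E X \<longrightarrow>
        card {i. i < length A \<and> (\<forall>c\<in>C. A ! i ! c = f c)} = 1)"

text \<open>Augmented orthogonal array AOA(s,t,k,v): each row is (first k entries, last entry).\<close>
definition AOA :: "nat \<Rightarrow> nat \<Rightarrow> nat \<Rightarrow> 'a set \<Rightarrow> 'b set \<Rightarrow> ('a list \<times> 'b) list \<Rightarrow> bool" where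
  "AOA s t k X Y A \<longleftrightarrow> 1 \<le> s \<and> s \<le> t \<and> t \<le> k \<and>
     OA t k X (map fst A) \<and>
     finite Y \<and> card Y = card X ^ (t - s) \<and>
     (\<forall>r \<in> set A. snd r \<in> Y) \<and>
     (\<forall>C f y. C \<subseteq> {0..<k} \<longrightarrow> card C = s \<longrightarrow> f \<in> C \<rightarrow>\<^sub>E X \<longrightarrow> y \<in> Y \<longrightarrow>
        card {i. i < length A \<and> (\<forall>c\<in>C. fst (A ! i) ! c = f c) \<and> snd (A ! i) = y} = 1)"

definition lin_subspace :: "nat \<Rightarrow> 'a::field list set \<Rightarrow> bool" where
  "lin_subspace n S \<longleftrightarrow> (\<forall>u\<in>S. length u = n) \<and> replicate n 0 \<in> S \<and>
     (\<forall>u\<in>S. \<forall>v\<in>S. map2 (+) u v \<in> S) \<and>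
     (\<forall>c. \<forall>u\<in>S. map ((*) c) u \<in> S)"

definition linear_AOA :: "nat \<Rightarrow> nat \<Rightarrow> nat \<Rightarrow> ('a::{finite,field} list \<times> 'a list) list \<Rightarrow> bool" where
  "linear_AOA s t k A \<longleftrightarrow> AOA s t k (UNIV :: 'a set) {ys. length ys = t - s} A \<and>
     lin_subspace (k + (t - s)) ((\<lambda>r. fst r @ snd r) ` set A)"

end

(*
  In characteristic 2 the conic {(1, t, t\<^sup>2)} \<union> {(0, 0, 1)} together with its nucleus (0, 1, 0)
  is a hyperoval: q + 2 vectors of F\<^sup>3, any three of them linearly independent. Using them as
  the columns of a generator matrix, the codewords x \<mapsto> (\<langle>g, x\<rangle>)\<^sub>g, x \<in> F\<^sup>3, form a linear
  OA(3, q + 2, q). The augmenting column is (\<langle>u, x\<rangle>, \<langle>w, x\<rangle>) for two vectors u, w spanning a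
  line that misses the hyperoval; such an external line exists because t \<mapsto> t\<^sup>2 + t is two-to-one,
  so t\<^sup>2 + t + a has no root for some a. Then every column g together with u and w is a basis
  of F\<^sup>3, which is the AOA(1, 3) condition.
*)

theory Submission
  imports Defs
begin

lemma of_nat_card_UNIV_eq_0: "of_nat (card (UNIV :: 'a::{finite,ring_1} set)) = (0::'a)"
proof -
  have "(\<Sum>x\<in>UNIV. x + 1) = (\<Sum>x\<in>UNIV. x :: 'a)"
    by (rule sum.reindex_bij_witness[of _ "\<lambda>x. x - 1" "\<lambda>x. x + 1"]) auto
  then show ?thesis by (simp add: sum.distrib)
qed

lemma two_eq_0_if_card_power_of_two:
  assumes "card (UNIV :: 'a::{finite,field} set) = 2 ^ m"
  shows "(2::'a) = 0"
proof -
  have "(2::'a) ^ m = 0"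
    using of_nat_card_UNIV_eq_0[where 'a='a] assms by simp
  then show ?thesis by simp
qed

lemma square_eq_square_iff_char_2:
  assumes "(2::'a::field) = 0"
  shows "s * s = t * t \<longleftrightarrow> s = (t::'a)"
proof -
  have "(s - t) * (s - t) = s * s - t * t - 2 * (s * t) + 2 * (t * t)" by algebra
  then have "(s - t) * (s - t) = s * s - t * t" using assms by simp
  then show ?thesis by (metis mult_eq_0_iff right_minus_eq)
qed

lemma ex_quadratic_without_root_char_2:
  assumes "(2::'a::{finite,field}) = 0"
  shows "\<exists>a::'a. \<forall>t. t * t + t + a \<noteq> 0"
proof -
  let ?f = "\<lambda>t::'a. t * t + t"
  have "(1::'a) + 1 = 0" using assms by (metis one_add_one)
  then have "?f 0 = ?f 1" by (simp only: mult_zero_left mult_1 add_0)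
  then have "\<not> inj ?f" unfolding inj_def by (metis zero_neq_one)
  then have "\<not> surj ?f" using finite_UNIV_surj_inj[of ?f] by auto
  then obtain b where b: "\<forall>t. b \<noteq> ?f t" unfolding surj_def by blast
  have "t * t + t + - b \<noteq> 0" for t using b[rule_format, of t] by (simp add: algebra_simps)
  then show ?thesis by blast
qed

type_synonym 'a vec3 = "'a \<times> 'a \<times> 'a"

definition dot :: "'a::field vec3 \<Rightarrow> 'a vec3 \<Rightarrow> 'a" where
  "dot u x = fst u * fst x + fst (snd u) * fst (snd x) + snd (snd u) * snd (snd x)"

definition det3 :: "'a::field vec3 \<Rightarrow> 'a vec3 \<Rightarrow> 'a vec3 \<Rightarrow> 'a" where
  "det3 u v w = fst u * (fst (snd v) * snd (snd w) - snd (snd v) * fst (snd w))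
              - fst (snd u) * (fst v * snd (snd w) - snd (snd v) * fst w)
              + snd (snd u) * (fst v * fst (snd w) - fst (snd v) * fst w)"

lemma det3_cramer:
  fixes u v w x :: "'a::field vec3"
  shows "det3 u v w * fst x = (fst (snd v) * snd (snd w) - snd (snd v) * fst (snd w)) * dot u x
     - (fst (snd u) * snd (snd w) - snd (snd u) * fst (snd w)) * dot v x
     + (fst (snd u) * snd (snd v) - snd (snd u) * fst (snd v)) * dot w x"
   and "det3 u v w * fst (snd x) = - (fst v * snd (snd w) - snd (snd v) * fst w) * dot u x
     + (fst u * snd (snd w) - snd (snd u) * fst w) * dot v x
     - (fst u * snd (snd v) - snd (snd u) * fst v) * dot w x"
   and "det3 u v w * snd (snd x) = (fst v * fst (snd w) - fst (snd v) * fst w) * dot u x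
     - (fst u * fst (snd w) - fst (snd u) * fst w) * dot v x
     + (fst u * fst (snd v) - fst (snd u) * fst v) * dot w x"
  unfolding det3_def dot_def by algebra+

lemma card_solutions_det3_ne_0:
  fixes u v w :: "'a::{finite,field} vec3"
  assumes "det3 u v w \<noteq> 0"
  shows "card {x. dot u x = a \<and> dot v x = b \<and> dot w x = c} = 1"
proof -
  let ?F = "\<lambda>x. (dot u x, dot v x, dot w x)"
  have "inj ?F"
  proof (rule injI)
    fix x y assume "?F x = ?F y"
    then have "dot u x = dot u y" "dot v x = dot v y" "dot w x = dot w y" by auto
    then have "det3 u v w * fst x = det3 u v w * fst y"
      "det3 u v w * fst (snd x) = det3 u v w * fst (snd y)"
      "det3 u v w * snd (snd x) = det3 u v w * snd (snd y)"
      by (simp_all only: det3_cramer)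
    then show "x = y" using assms by (simp add: prod_eq_iff)
  qed
  then have "card (?F -` {(a, b, c)}) = 1"
    by (simp add: card_vimage_inj finite_UNIV_inj_surj)
  moreover have "{x. dot u x = a \<and> dot v x = b \<and> dot w x = c} = ?F -` {(a, b, c)}"
    by auto
  ultimately show ?thesis by argo
qed

lemma card_nth_map_enum:
  assumes "distinct xs" "set xs = UNIV"
  shows "card {i. i < length (map r xs) \<and> P (map r xs ! i)} = card {x. P (r x)}"
proof -
  have "bij_betw ((!) xs) {..<length xs} UNIV"
    using bij_betw_nth[OF assms(1) refl assms(2)[symmetric]] .
  then have "bij_betw ((!) xs) {i \<in> {..<length xs}. P (r (xs ! i))} {x \<in> UNIV. P (r x)}"
    by (rule bij_betw_Collect) simp
  then have "card {i. i < length xs \<and> P (r (xs ! i))} = card {x. P (r x)}"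
    by (simp add: bij_betw_same_card)
  moreover have "{i. i < length (map r xs) \<and> P (map r xs ! i)} = {i. i < length xs \<and> P (r (xs ! i))}"
    by auto
  ultimately show ?thesis by simp
qed

lemma det3_conic_points:
  "det3 (1, s, s * s) (1, t, t * t) (1, r, r * r) = (t - s) * (r - s) * (r - (t::'a::field))"
  unfolding det3_def by simp algebra

definition hyperoval :: "'a::field vec3 set" where
  "hyperoval = range (\<lambda>t. (1, t, t * t)) \<union> {(0, 1, 0), (0, 0, 1)}"

lemma det3_hyperoval_ne_0:
  assumes "(2::'a::field) = 0"
    and "u \<in> hyperoval" "v \<in> hyperoval" "w \<in> hyperoval" "u \<noteq> v" "v \<noteq> w" "u \<noteq> (w :: 'a vec3)"
  shows "det3 u v w \<noteq> 0"
  using assms(2-) unfolding hyperoval_def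
  apply (elim UnE imageE insertE emptyE)
  apply (simp_all add: det3_conic_points)
  apply (simp_all add: det3_def square_eq_square_iff_char_2[OF assms(1)])
  done

lemma card_hyperoval: "card (hyperoval :: 'a::{finite,field} vec3 set) = card (UNIV :: 'a set) + 2"
proof -
  have "card (range (\<lambda>t::'a. (1::'a, t, t * t))) = card (UNIV :: 'a set)"
    by (rule card_image) (simp add: inj_on_def)
  moreover have "range (\<lambda>t::'a. (1::'a, t, t * t)) \<inter> {(0, 1, 0), (0, 0, 1)} = {}" by auto
  ultimately show ?thesis unfolding hyperoval_def by (simp add: card_Un_disjoint)
qed

lemma det3_external_line_ne_0:
  assumes "\<forall>t. t * t + t + a \<noteq> 0" and "g \<in> hyperoval"
  shows "det3 g (0, 1, -1) (1, -a, 0) \<noteq> (0::'a::field)"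
proof -
  have "det3 g (0, 1, -1) (1, -a, 0) = - (a * fst g + fst (snd g) + snd (snd g))"
    unfolding det3_def by (simp add: algebra_simps)
  moreover have "a * fst g + fst (snd g) + snd (snd g) \<noteq> 0"
    using assms unfolding hyperoval_def by (auto simp: add_ac)
  ultimately show ?thesis by (simp only: neg_equal_0_iff_equal not_False_eq_True)
qed

definition codeword :: "'a::field vec3 list \<Rightarrow> 'a vec3 \<Rightarrow> 'a list" where
  "codeword G x = map (\<lambda>g. dot g x) G"

text \<open>Rows are indexed by the messages \<open>xs\<close>; \<open>G\<close> gives the ordinary columns and \<open>E\<close> the
  coordinates of the augmenting column.\<close>
definition code_array :: "'a::field vec3 list \<Rightarrow> 'a vec3 list \<Rightarrow> 'a vec3 list \<Rightarrow> ('a list \<times> 'a list) list" where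
  "code_array G E xs = map (\<lambda>x. (codeword G x, codeword E x)) xs"

definition arc :: "'a::field vec3 list \<Rightarrow> bool" where
  "arc G \<longleftrightarrow> distinct G \<and>
     (\<forall>u\<in>set G. \<forall>v\<in>set G. \<forall>w\<in>set G. u \<noteq> v \<and> v \<noteq> w \<and> u \<noteq> w \<longrightarrow> det3 u v w \<noteq> 0)"

lemma lin_subspace_codewords: "lin_subspace (length G) (range (codeword G))"
  unfolding lin_subspace_def
proof (intro conjI ballI allI)
  show "replicate (length G) 0 \<in> range (codeword G)"
  proof
    show "replicate (length G) 0 = codeword G (0, 0, 0)"
      unfolding codeword_def by (rule nth_equalityI) (simp_all add: dot_def)
  qed simp
next
  fix u v assume "u \<in> range (codeword G)" "v \<in> range (codeword G)"
  then obtain x y where "u = codeword G x" "v = codeword G y" by blast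
  then have "map2 (+) u v =
      codeword G (fst x + fst y, fst (snd x) + fst (snd y), snd (snd x) + snd (snd y))"
    unfolding codeword_def by (intro nth_equalityI) (simp_all add: dot_def algebra_simps)
  then show "map2 (+) u v \<in> range (codeword G)" by blast
next
  fix c u assume "u \<in> range (codeword G)"
  then obtain x where "u = codeword G x" by blast
  then have "map ((*) c) u = codeword G (c * fst x, c * fst (snd x), c * snd (snd x))"
    unfolding codeword_def by (intro nth_equalityI) (simp_all add: dot_def algebra_simps)
  then show "map ((*) c) u \<in> range (codeword G)" by blast
qed (auto simp: codeword_def)

lemma card_codewords_through_3_points:
  fixes G :: "'a::{finite,field} vec3 list"
  assumes "arc G" "i < length G" "j < length G" "k < length G" "i \<noteq> j" "j \<noteq> k" "i \<noteq> k"
  shows "card {x. \<forall>c\<in>{i, j, k}. codeword G x ! c = f c} = 1"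
proof -
  have "{x. \<forall>c\<in>{i, j, k}. codeword G x ! c = f c} =
      {x. dot (G ! i) x = f i \<and> dot (G ! j) x = f j \<and> dot (G ! k) x = f k}"
    using assms(2-4) by (auto simp: codeword_def)
  also have "card \<dots> = 1"
  proof (rule card_solutions_det3_ne_0)
    show "det3 (G ! i) (G ! j) (G ! k) \<noteq> 0"
      using assms unfolding arc_def by (simp add: nth_eq_iff_index_eq)
  qed
  finally show ?thesis .
qed

lemma card_UNIV_vec3: "card (UNIV :: 'a::finite vec3 set) = card (UNIV :: 'a set) ^ 3"
  by (simp flip: UNIV_Times_UNIV add: card_cartesian_product power3_eq_cube)

lemma OA_codewords:
  fixes G :: "'a::{finite,field} vec3 list"
  assumes "arc G" "3 \<le> length G" "distinct xs" "set xs = UNIV"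
  shows "OA 3 (length G) (UNIV :: 'a set) (map (codeword G) xs)"
  unfolding OA_def
proof (intro conjI ballI allI impI)
  show "length (map (codeword G) xs) = card (UNIV :: 'a set) ^ 3"
    using assms(3,4) distinct_card[of xs] by (simp add: card_UNIV_vec3)
next
  fix C f assume C: "C \<subseteq> {0..<length G}" "card C = 3"
  then obtain i j k where ijk: "C = {i, j, k}" "i \<noteq> j" "j \<noteq> k" "i \<noteq> k"
    by (metis card_3_iff)
  have "card {x. \<forall>c\<in>C. codeword G x ! c = f c} = 1"
    unfolding ijk(1) using C(1) ijk by (intro card_codewords_through_3_points assms(1)) auto
  then show "card {i. i < length (map (codeword G) xs) \<and>
      (\<forall>c\<in>C. map (codeword G) xs ! i ! c = f c)} = 1"
    using card_nth_map_enum[OF assms(3,4), of "codeword G" "\<lambda>r. \<forall>c\<in>C. r ! c = f c"] by simp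
qed (use assms(2) in \<open>auto simp: codeword_def\<close>)

lemma card_codewords_through_point_and_tail:
  fixes G :: "'a::{finite,field} vec3 list"
  assumes "j < length G" "det3 (G ! j) u w \<noteq> 0"
  shows "card {x. codeword G x ! j = c \<and> codeword [u, w] x = [y0, y1]} = 1"
proof -
  have "{x. codeword G x ! j = c \<and> codeword [u, w] x = [y0, y1]} =
      {x. dot (G ! j) x = c \<and> dot u x = y0 \<and> dot w x = y1}"
    using assms(1) by (auto simp: codeword_def)
  also have "card \<dots> = 1" using assms(2) by (rule card_solutions_det3_ne_0)
  finally show ?thesis .
qed

lemma AOA_code_array:
  fixes G :: "'a::{finite,field} vec3 list"
  assumes "arc G" "3 \<le> length G" "\<forall>g\<in>set G. det3 g u w \<noteq> 0" "distinct xs" "set xs = UNIV"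
  shows "AOA 1 3 (length G) (UNIV :: 'a set) {ys. length ys = 2} (code_array G [u, w] xs)"
  unfolding AOA_def
proof (intro conjI ballI allI impI)
  show "OA 3 (length G) UNIV (map fst (code_array G [u, w] xs))"
    using OA_codewords[OF assms(1,2,4,5)] by (simp add: code_array_def comp_def)
  show "card {ys :: 'a list. length ys = 2} = card (UNIV :: 'a set) ^ (3 - 1)"
    using card_lists_length_eq[of "UNIV :: 'a set" 2] by simp
  show "finite {ys :: 'a list. length ys = 2}"
    using finite_lists_length_eq[of "UNIV :: 'a set" 2] by simp
next
  fix C f y assume C: "C \<subseteq> {0..<length G}" "card C = 1" and "y \<in> {ys :: 'a list. length ys = 2}"
  then obtain y0 y1 where y: "y = [y0, y1]"
    by (auto simp: length_Suc_conv numeral_2_eq_2)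
  obtain j where j: "C = {j}" using C(2) card_1_singletonE by blast
  have "card {x. (\<forall>c\<in>C. codeword G x ! c = f c) \<and> codeword [u, w] x = y} = 1"
    unfolding j y using C(1) assms(3) j
    by (simp add: card_codewords_through_point_and_tail)
  then show "card {i. i < length (code_array G [u, w] xs) \<and>
      (\<forall>c\<in>C. fst (code_array G [u, w] xs ! i) ! c = f c) \<and> snd (code_array G [u, w] xs ! i) = y} = 1"
    using card_nth_map_enum[OF assms(4,5), of "\<lambda>x. (codeword G x, codeword [u, w] x)"
        "\<lambda>r. (\<forall>c\<in>C. fst r ! c = f c) \<and> snd r = y"]
    by (simp add: code_array_def)
qed (use assms(2) in \<open>auto simp: code_array_def codeword_def\<close>)

lemma linear_AOA_code_array:
  fixes G :: "'a::{finite,field} vec3 list"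
  assumes "arc G" "3 \<le> length G" "\<forall>g\<in>set G. det3 g u w \<noteq> 0" "distinct xs" "set xs = UNIV"
  shows "linear_AOA 1 3 (length G) (code_array G [u, w] xs)"
proof -
  have "(\<lambda>r. fst r @ snd r) ` set (code_array G [u, w] xs) =
      range (\<lambda>x. codeword G x @ codeword [u, w] x)"
    using assms(5) by (simp add: code_array_def image_image)
  also have "\<dots> = range (codeword (G @ [u, w]))"
    by (simp add: codeword_def)
  finally have "(\<lambda>r. fst r @ snd r) ` set (code_array G [u, w] xs) = range (codeword (G @ [u, w]))" .
  then show ?thesis
    unfolding linear_AOA_def
    using AOA_code_array[OF assms] lin_subspace_codewords[of "G @ [u, w]"] by simp
qed

theorem theorem3p9:
  assumes "card (UNIV :: 'a::{finite,field} set) \<ge> 4"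
    and "\<exists>m::nat. card (UNIV :: 'a set) = 2 ^ m"
  shows "\<exists>A :: ('a list \<times> 'a list) list. linear_AOA 1 3 (card (UNIV :: 'a set) + 2) A"
proof -
  have char_2: "(2::'a) = 0"
    using assms(2) two_eq_0_if_card_power_of_two by blast
  obtain a :: 'a where a: "\<forall>t. t * t + t + a \<noteq> 0"
    using ex_quadratic_without_root_char_2[OF char_2] by blast
  obtain G :: "'a vec3 list" where G: "distinct G" "set G = hyperoval"
    using finite_distinct_list[of "hyperoval :: 'a vec3 set"] by auto
  obtain xs :: "'a vec3 list" where xs: "distinct xs" "set xs = UNIV"
    using finite_distinct_list[of "UNIV :: 'a vec3 set"] by auto
  have length_G: "length G = card (UNIV :: 'a set) + 2"
    using G by (metis card_hyperoval distinct_card)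
  have "arc G"
    unfolding arc_def using G det3_hyperoval_ne_0[OF char_2] by blast
  moreover have "3 \<le> length G" using length_G assms(1) by simp
  moreover have "\<forall>g\<in>set G. det3 g (0, 1, -1) (1, -a, 0) \<noteq> 0"
    using G(2) a det3_external_line_ne_0 by blast
  ultimately have "linear_AOA 1 3 (length G) (code_array G [(0, 1, -1), (1, -a, 0)] xs)"
    using xs by (rule linear_AOA_code_array)
  then show ?thesis unfolding length_G by blast
qed

end
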